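(* Let $\mathcal{M}$ be a playable coalition model, $w\in W$, $\varphi\in\mathcal{L}_{CL}$, and $C\subseteq D\subseteq N$. Then (1) if $\mathcal{M},w\models\mathrm{FI}_D(\varphi)$ then $\mathcal{M},w\models\mathrm{FI}_C(\varphi)$; (2) if $\mathcal{M},w\models\mathrm{FC}_C(\varphi)$ then $\mathcal{M},w\models\mathrm{FC}_D(\varphi)$.
   Context: Let $N=\{1,\dots,n\}$ be a finite set of agents and $\mathrm{Prop}$ a countable set of atoms. The language $\mathcal{L}_{CL}$ is $\varphi ::= p \mid \neg\varphi \mid (\varphi\wedge\psi)\mid [C]\varphi$ ($p\in\mathrm{Prop}$, $C\subseteq N$). A coalition model is $\mathcal{M}=(W,E,V)$, $W$ nonempty, $E_w(C)\subseteq\mathcal{P}(W)$ for $w\in W$, $C\subseteq N$, $V:\mathrm{Prop}\to\mathcal{P}(W)$; satisfaction is classical for Boolean parts and $\mathcal{M},w\models[C]\varphi$ iff $[\![\varphi]\!]_{\mathcal{M}}=\{u\mid\mathcal{M},u\models\varphi\}\in E_w(C)$. Write $\overline{X}=W\setminus X$. $E_w$ is playable if for all $C,D\subseteq N$, $X,Y\subseteq W$: (i) $\emptyset\notin E_w(C)$; (ii) $W\in E_w(C)$; (iii) if $X\in E_w(C)$ and $X\subseteq Y$ then $Y\in E_w(C)$; (iv) if $C\cap D=\emptyset$, $X\in E_w(C)$, $Y\in E_w(D)$ then $X\cap Y\in E_w(C\cup D)$; (v) $X\notin E_w(\emptyset)$ iff $\overline{X}\in E_w(N)$; the model is playable if each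 $E_w$ is. $\mathrm{FC}_C(\varphi)=[C]\varphi\wedge[C]\neg\varphi$, $\mathrm{FI}_C(\varphi)=\neg[C]\varphi\wedge\neg[C]\neg\varphi$. *)

theory Defs
  imports Main
begin

datatype fm = Atom nat | Neg fm | Conj fm fm | Box "nat set" fm

record 'w cmodel =
  W :: "'w set"
  E :: "'w \<Rightarrow> nat set \<Rightarrow> 'w set set"
  V :: "nat \<Rightarrow> 'w set"

fun sat :: "'w cmodel \<Rightarrow> 'w \<Rightarrow> fm \<Rightarrow> bool" where
  "sat M w (Atom p) = (w \<in> V M p)"
| "sat M w (Neg \<phi>) = (\<not> sat M w \<phi>)"
| "sat M w (Conj \<phi> \<psi>) = (sat M w \<phi> \<and> sat M w \<psi>)"
| "sat M w (Box C \<phi>) = ({u \<in> W M. sat M u \<phi>} \<in> E M w C)"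

definition coalition_model :: "nat \<Rightarrow> 'w cmodel \<Rightarrow> bool" where
  "coalition_model n M \<longleftrightarrow> W M \<noteq> {} \<and>
     (\<forall>w\<in>W M. \<forall>C\<subseteq>{1..n}. E M w C \<subseteq> Pow (W M)) \<and>
     (\<forall>p. V M p \<subseteq> W M)"

definition playable_at :: "nat \<Rightarrow> 'w cmodel \<Rightarrow> 'w \<Rightarrow> bool" where
  "playable_at n M w \<longleftrightarrow>
     (\<forall>C\<subseteq>{1..n}. {} \<notin> E M w C) \<and>
     (\<forall>C\<subseteq>{1..n}. W M \<in> E M w C) \<and>
     (\<forall>C\<subseteq>{1..n}. \<forall>X Y. X \<in> E M w C \<and> X \<subseteq> Y \<and> Y \<subseteq> W M \<longrightarrow> Y \<in> E M w C) \<and>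
     (\<forall>C\<subseteq>{1..n}. \<forall>D\<subseteq>{1..n}. \<forall>X Y. C \<inter> D = {} \<and> X \<in> E M w C \<and> Y \<in> E M w D
         \<longrightarrow> X \<inter> Y \<in> E M w (C \<union> D)) \<and>
     (\<forall>X\<subseteq>W M. X \<notin> E M w {} \<longleftrightarrow> W M - X \<in> E M w {1..n})"

definition playable :: "nat \<Rightarrow> 'w cmodel \<Rightarrow> bool" where
  "playable n M \<longleftrightarrow> coalition_model n M \<and> (\<forall>w\<in>W M. playable_at n M w)"

definition FC :: "nat set \<Rightarrow> fm \<Rightarrow> fm" where
  "FC C \<phi> = Conj (Box C \<phi>) (Box C (Neg \<phi>))"

definition FI :: "nat set \<Rightarrow> fm \<Rightarrow> fm" where
  "FI C \<phi> = Conj (Neg (Box C \<phi>)) (Neg (Box C (Neg \<phi>)))"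

end

theory Submission
  imports Defs
begin

text \<open>Effectivity is monotone in the coalition: D is the disjoint union of C and D - C,
  the latter is effective for W, so superadditivity makes X \<inter> W = X effective for D.
  Both claims follow by applying this to the truth sets of \<phi> and of its negation.\<close>

lemma playable_at_W_effective:
  "playable_at n M w \<Longrightarrow> C \<subseteq> {1..n} \<Longrightarrow> W M \<in> E M w C"
  unfolding playable_at_def by simp

lemma playable_at_superadditive:
  assumes "playable_at n M w" and "C \<subseteq> {1..n}" and "D \<subseteq> {1..n}" and "C \<inter> D = {}"
    and "X \<in> E M w C" and "Y \<in> E M w D"
  shows "X \<inter> Y \<in> E M w (C \<union> D)"
  using assms unfolding playable_at_def by simp

lemma playable_at_effective_mono:
  assumes "playable_at n M w" and "C \<subseteq> D" and "D \<subseteq> {1..n}"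
    and "X \<in> E M w C" and "X \<subseteq> W M"
  shows "X \<in> E M w D"
proof -
  have "C \<subseteq> {1..n}" and "D - C \<subseteq> {1..n}"
    using assms(2,3) by blast+
  moreover from this(2) have "W M \<in> E M w (D - C)"
    by (rule playable_at_W_effective[OF assms(1)])
  ultimately have "X \<inter> W M \<in> E M w (C \<union> (D - C))"
    using playable_at_superadditive[OF assms(1)] assms(4) by blast
  moreover have "X \<inter> W M = X" and "C \<union> (D - C) = D"
    using assms(2,5) by blast+
  ultimately show ?thesis by simp
qed

lemma sat_Box_coalition_mono:
  assumes "playable_at n M w" and "C \<subseteq> D" and "D \<subseteq> {1..n}"
    and "sat M w (Box C \<psi>)"
  shows "sat M w (Box D \<psi>)"
  using playable_at_effective_mono[OF assms(1-3)] assms(4) by auto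

theorem mainTheorem13:
  fixes n :: nat and M :: "'w cmodel" and w :: 'w and \<phi> :: fm and C D :: "nat set"
  assumes "playable n M" and "w \<in> W M"
    and "C \<subseteq> D" and "D \<subseteq> {1..n}"
  shows "(sat M w (FI D \<phi>) \<longrightarrow> sat M w (FI C \<phi>)) \<and>
         (sat M w (FC C \<phi>) \<longrightarrow> sat M w (FC D \<phi>))"
proof -
  have "playable_at n M w"
    using assms(1,2) unfolding playable_def by blast
  from sat_Box_coalition_mono[OF this assms(3,4)]
  have "sat M w (Box C \<psi>) \<Longrightarrow> sat M w (Box D \<psi>)" for \<psi> .
  then show ?thesis
    unfolding FI_def FC_def sat.simps(2,3) by blast
qed

end
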